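(* Let $R$ be a unital associative simple algebra over an infinite field $F$ and let $p\in F[x]$ be a nonconstant polynomial. Then $$\mathrm{span}_F\{ab-ba\mid a,b\in R\}\subseteq \mathrm{span}_F\{p(ab)-p(ba)\mid a,b\in R\}.$$
   Context: $\mathrm{span}_F$ denotes the $F$-linear span. *)

theory Defs
  imports Main "HOL-Computational_Algebra.Polynomial"
begin

text \<open>An associative unital algebra over a field: the ring structure comes from the
type class ring_1 on 'r, the F-vector space structure from the scalar multiplication s,
and the two are compatible (bilinearity of multiplication).\<close>
definition algebra_over :: "('f::field \<Rightarrow> 'r::ring_1 \<Rightarrow> 'r) \<Rightarrow> bool" where
  "algebra_over s \<longleftrightarrow> module s \<and>
     (\<forall>c a b. s c (a * b) = s c a * b) \<and> (\<forall>c a b. s c (a * b) = a * s c b)"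

definition alg_ideal :: "('f::field \<Rightarrow> 'r::ring_1 \<Rightarrow> 'r) \<Rightarrow> 'r set \<Rightarrow> bool" where
  "alg_ideal s I \<longleftrightarrow> 0 \<in> I \<and> (\<forall>x\<in>I. \<forall>y\<in>I. x + y \<in> I) \<and> (\<forall>c. \<forall>x\<in>I. s c x \<in> I) \<and>
     (\<forall>r. \<forall>x\<in>I. r * x \<in> I \<and> x * r \<in> I)"

definition simple_algebra :: "('f::field \<Rightarrow> 'r::ring_1 \<Rightarrow> 'r) \<Rightarrow> bool" where
  "simple_algebra s \<longleftrightarrow> algebra_over s \<and> (1::'r) \<noteq> 0 \<and>
     (\<forall>I. alg_ideal s I \<longrightarrow> I = {0} \<or> I = UNIV)"

definition poly_alg :: "('f::field \<Rightarrow> 'r::ring_1 \<Rightarrow> 'r) \<Rightarrow> 'f poly \<Rightarrow> 'r \<Rightarrow> 'r" where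
  "poly_alg s p x = (\<Sum>i\<le>degree p. s (coeff p i) (x ^ i))"

end

(* Let W be the span of all p(ab) - p(ba). Over an infinite field a polynomial curve
   l |-> G l with values in a subspace has all its coefficients in that subspace, so its
   derivative at 0 lies there too. Differentiating curves such as
   p((a + l[r,a])(b + l[r,b])) - p((b + l[r,b])(a + l[r,a])) and p(a(1 + lc)) - p((1 + lc)a)
   shows that W is closed under [r, -] and that T = {t. [t, R] <= W} is a subalgebra and
   Lie ideal containing every p(a); scaling a by l then gives a^(deg p) in T.

   In a simple algebra such a T is either everything, and then [a, b] is in W, or
   commutative. In the second case let K be least with x^K in T for all x: the binomial
   coefficients (K choose j), 0 < j < K, vanish in F, hence ad(x)^K = ad(x^K), and
   commutativity of T makes ad nilpotent and every x^(2K) central. A simple algebra with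
   central powers has no nonzero square-zero elements and is therefore a division
   algebra; a noncentral x would then admit v with [x, v] = 1, and [xv, x] = -x contradicts
   nilpotency of ad(xv). So the algebra is commutative and [a, b] = 0. *)

theory Submission
  imports Defs
begin

context vector_space
begin

lemma subspace_scale_cancel:
  assumes "subspace W" "c *s x \<in> W" "c \<noteq> 0"
  shows "x \<in> W"
  using subspace_scale[OF assms(1,2), of "inverse c"] assms(3) by simp

lemma divided_difference_sum:
  assumes "l \<noteq> \<mu>"
  shows "inverse (l - \<mu>) *s ((\<Sum>i\<le>N. l ^ i *s v i) - (\<Sum>i\<le>N. \<mu> ^ i *s v i))
    = (\<Sum>j<N. l ^ j *s (\<Sum>i\<in>{Suc j..N}. \<mu> ^ (i - Suc j) *s v i))"
proof -
  have "(\<Sum>i\<le>N. l ^ i *s v i) - (\<Sum>i\<le>N. \<mu> ^ i *s v i)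
      = (\<Sum>i\<le>N. ((l - \<mu>) * (\<Sum>j<i. \<mu> ^ (i - Suc j) * l ^ j)) *s v i)"
    unfolding power_diff_sumr2[symmetric] by (simp add: scale_left_diff_distrib sum_subtractf)
  then have "inverse (l - \<mu>) *s ((\<Sum>i\<le>N. l ^ i *s v i) - (\<Sum>i\<le>N. \<mu> ^ i *s v i))
      = (\<Sum>i\<le>N. \<Sum>j<i. l ^ j *s \<mu> ^ (i - Suc j) *s v i)"
    using assms by (simp add: scale_sum_right scale_sum_left mult.assoc[symmetric] mult.commute)
  also have "\<dots> = (\<Sum>j<N. \<Sum>i\<in>{Suc j..N}. l ^ j *s \<mu> ^ (i - Suc j) *s v i)"
    by (rule sum.nested_swap')
  finally show ?thesis
    by (simp add: scale_sum_right)
qed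

lemma poly_coeffs_in_subspace:
  assumes "subspace W" "infinite S" "\<And>l. l \<in> S \<Longrightarrow> (\<Sum>i\<le>N. l ^ i *s v i) \<in> W" "i \<le> N"
  shows "v i \<in> W"
  using assms(2-)
proof (induction N arbitrary: v S i)
  case 0
  then obtain l where "l \<in> S"
    using infinite_imp_nonempty by blast
  then show ?case
    using 0 by simp
next
  case (Suc N)
  obtain \<mu> where \<mu>: "\<mu> \<in> S"
    using Suc.prems(1) infinite_imp_nonempty by blast
  define w where "w j = (\<Sum>i\<in>{Suc j..Suc N}. \<mu> ^ (i - Suc j) *s v i)" for j
  have "w N \<in> W"
  proof (rule Suc.IH)
    show "infinite (S - {\<mu>})"
      using Suc.prems(1) by simp
    fix l assume l: "l \<in> S - {\<mu>}"
    have "inverse (l - \<mu>) *s ((\<Sum>i\<le>Suc N. l ^ i *s v i) - (\<Sum>i\<le>Suc N. \<mu> ^ i *s v i)) \<in> W"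
      using Suc.prems(2) l \<mu> assms(1) by (intro subspace_scale subspace_diff) auto
    moreover have "l \<noteq> \<mu>"
      using l by blast
    ultimately show "(\<Sum>j\<le>N. l ^ j *s w j) \<in> W"
      by (simp only: divided_difference_sum w_def lessThan_Suc_atMost not_False_eq_True)
  qed simp
  then have top: "v (Suc N) \<in> W"
    by (simp add: w_def)
  have "v i \<in> W" if "i \<le> N" for i
  proof (rule Suc.IH[OF Suc.prems(1) _ that])
    fix l assume "l \<in> S"
    then have "(\<Sum>i\<le>Suc N. l ^ i *s v i) - l ^ Suc N *s v (Suc N) \<in> W"
      using Suc.prems(2) top assms(1) by (intro subspace_diff subspace_scale) auto
    then show "(\<Sum>i\<le>N. l ^ i *s v i) \<in> W"
      by simp
  qed
  then show ?case
    using top Suc.prems(3) le_Suc_eq by auto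
qed

end

definition commutator :: "'r::ring_1 \<Rightarrow> 'r \<Rightarrow> 'r" where
  "commutator x y = x * y - y * x"

definition center :: "'r::ring_1 set" where
  "center = {z. \<forall>y. z * y = y * z}"

lemma commutator_add_right: "commutator t (x + y) = commutator t x + commutator t y"
  by (simp add: commutator_def algebra_simps)

lemma commutator_minus_right: "commutator t (- x) = - commutator t x"
  by (simp add: commutator_def)

lemma commutator_power_sum:
  fixes a r :: "'r::ring_1"
  shows "(\<Sum>j<i. a ^ j * commutator r a * a ^ (i - Suc j)) = commutator r (a ^ i)"
proof -
  define h where "h j = a ^ j * r * a ^ (i - j)" for j
  have "a ^ j * commutator r a * a ^ (i - Suc j) = h j - h (Suc j)" if "j < i" for j
  proof -
    have "a ^ j * commutator r a * a ^ (i - Suc j)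
        = a ^ j * r * (a * a ^ (i - Suc j)) - (a ^ j * a) * r * a ^ (i - Suc j)"
      by (simp add: commutator_def algebra_simps)
    also have "a * a ^ (i - Suc j) = a ^ (i - j)"
      using that by (simp flip: power_Suc add: Suc_diff_Suc)
    finally show ?thesis
      unfolding h_def by (simp flip: power_Suc2)
  qed
  then have "(\<Sum>j<i. a ^ j * commutator r a * a ^ (i - Suc j)) = (\<Sum>j<i. h j - h (Suc j))"
    by simp
  also have "\<dots> = commutator r (a ^ i)"
    by (simp only: sum_lessThan_telescope') (simp add: h_def commutator_def)
  finally show ?thesis .
qed

lemma neg_one_power_if_binomials_vanish:
  assumes "0 < K" "\<And>j. 0 < j \<Longrightarrow> j < K \<Longrightarrow> of_nat (K choose j) = (0::'a::comm_ring_1)"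
  shows "(-1::'a) ^ K = -1"
proof -
  have "0 = (\<Sum>i\<le>K. (-1) ^ i * of_nat (K choose i) :: 'a)"
    using choose_alternating_sum[OF assms(1)] by simp
  also have "\<dots> = (\<Sum>i\<in>{0, K}. (-1) ^ i * of_nat (K choose i))"
    by (rule sum.mono_neutral_right) (use assms(2) in auto)
  also have "\<dots> = 1 + (-1) ^ K"
    using assms(1) by simp
  finally show ?thesis
    by (simp add: eq_neg_iff_add_eq_0 add.commute)
qed

locale field_algebra =
  fixes s :: "'f::field \<Rightarrow> 'r::ring_1 \<Rightarrow> 'r"
  assumes algebra: "algebra_over s"
begin

sublocale vector_space s
  using algebra by (simp add: algebra_over_def module_iff_vector_space)

lemma scale_mult_left [simp]: "s c a * b = s c (a * b)"
  using algebra unfolding algebra_over_def by metis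

lemma scale_mult_right [simp]: "a * s c b = s c (a * b)"
  using algebra unfolding algebra_over_def by metis

lemma scale_power: "s c a ^ n = s (c ^ n) (a ^ n)"
  by (induction n) (simp_all add: mult.commute)

lemma scale_two: "s 2 x = x + x"
  by (metis one_add_one scale_left_distrib scale_one)

lemma binomial_one_plus: "(1 + z) ^ m = (\<Sum>j\<le>m. s (of_nat (m choose j)) (z ^ j))"
proof (induction m)
  case 0
  then show ?case by simp
next
  case (Suc m)
  define S where "S = (\<Sum>j\<le>m. s (of_nat (m choose j)) (z ^ j))"
  have S_shift: "S = 1 + (\<Sum>j\<le>m. s (of_nat (m choose Suc j)) (z ^ Suc j))"
  proof -
    have "S = (\<Sum>j\<le>Suc m. s (of_nat (m choose j)) (z ^ j))"
      unfolding S_def by (simp add: binomial_eq_0)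
    then show ?thesis
      by (subst (asm) sum.atMost_Suc_shift) simp
  qed
  have "S * z = (\<Sum>j\<le>m. s (of_nat (m choose j)) (z ^ Suc j))"
    unfolding S_def sum_distrib_right by (simp add: power_commutes)
  then have "(1 + z) ^ Suc m = 1 + (\<Sum>j\<le>m. s (of_nat (Suc m choose Suc j)) (z ^ Suc j))"
    using Suc unfolding S_def[symmetric] power_Suc2 S_shift
    by (simp add: distrib_left scale_left_distrib sum.distrib algebra_simps)
  also have "\<dots> = (\<Sum>j\<le>Suc m. s (of_nat (Suc m choose j)) (z ^ j))"
    by (simp only: sum.atMost_Suc_shift) simp
  finally show ?case .
qed

lemma commutator_iterate:
  "(commutator x ^^ j) y = (\<Sum>i\<le>j. s ((-1) ^ i * of_nat (j choose i)) (x ^ (j - i) * y * x ^ i))"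
proof (induction j)
  case 0
  then show ?case by simp
next
  case (Suc j)
  define c where "c j i = ((-1) ^ i * of_nat (j choose i) :: 'f)" for j i
  define S where "S = (\<Sum>i\<le>j. s (c j i) (x ^ (j - i) * y * x ^ i))"
  have "x * S = (\<Sum>i\<le>Suc j. s (c j i) (x ^ (Suc j - i) * y * x ^ i))"
    unfolding S_def sum_distrib_left
    by (simp add: c_def binomial_eq_0 mult.assoc[symmetric] Suc_diff_le)
  also have "\<dots> = s (c j 0) (x ^ Suc j * y) + (\<Sum>i\<le>j. s (c j (Suc i)) (x ^ (j - i) * y * x ^ Suc i))"
    by (subst sum.atMost_Suc_shift) simp
  finally have xS: "x * S = \<dots>" .
  have Sx: "S * x = (\<Sum>i\<le>j. s (c j i) (x ^ (j - i) * y * x ^ Suc i))"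
    unfolding S_def sum_distrib_right by (simp add: mult.assoc power_commutes)
  have c_Suc: "c (Suc j) (Suc i) = c j (Suc i) - c j i" for i
    unfolding c_def by (simp add: algebra_simps)
  have "(commutator x ^^ Suc j) y = commutator x S"
    using Suc by (simp add: S_def c_def)
  also have "\<dots> = x * S - S * x"
    by (simp add: commutator_def)
  also have "\<dots> = s (c (Suc j) 0) (x ^ Suc j * y)
      + (\<Sum>i\<le>j. s (c (Suc j) (Suc i)) (x ^ (j - i) * y * x ^ Suc i))"
    unfolding xS Sx c_Suc by (simp add: c_def scale_left_diff_distrib sum_subtractf)
  also have "\<dots> = (\<Sum>i\<le>Suc j. s (c (Suc j) i) (x ^ (Suc j - i) * y * x ^ i))"
    by (simp only: sum.atMost_Suc_shift) simp
  finally show ?case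
    unfolding c_def .
qed

lemma commutator_iterate_eq_commutator_power:
  fixes x y :: 'r
  assumes "0 < K" "\<And>j. 0 < j \<Longrightarrow> j < K \<Longrightarrow> of_nat (K choose j) = (0::'f)"
  shows "(commutator x ^^ K) y = commutator (x ^ K) y"
proof -
  have "(commutator x ^^ K) y
      = (\<Sum>i\<in>{0, K}. s ((-1) ^ i * of_nat (K choose i)) (x ^ (K - i) * y * x ^ i))"
    unfolding commutator_iterate by (rule sum.mono_neutral_right) (use assms(2) in auto)
  then show ?thesis
    using assms by (simp add: neg_one_power_if_binomials_vanish commutator_def)
qed

lemma alg_ideal_central_multiples:
  assumes "z \<in> center"
  shows "alg_ideal s (range ((*) z))"
  unfolding alg_ideal_def
proof (intro conjI allI ballI)
  fix c r x assume "x \<in> range ((*) z)"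
  then obtain q where "x = z * q"
    by blast
  moreover have "z * r = r * z"
    using assms unfolding center_def by blast
  ultimately have "s c x = z * s c q" "r * x = z * (r * q)" "x * r = z * (q * r)"
    by (simp_all add: mult.assoc) (metis mult.assoc)
  then show "s c x \<in> range ((*) z)" "r * x \<in> range ((*) z)" "x * r \<in> range ((*) z)"
    by (metis rangeI)+
qed (auto simp: image_iff distrib_left[symmetric] intro: exI[of _ 0])

lemma alg_ideal_sandwich:
  assumes "subspace T"
  shows "alg_ideal s {z. \<forall>u v. u * z * v \<in> T}"
  unfolding alg_ideal_def
proof (intro conjI allI ballI)
  fix r x assume x: "x \<in> {z. \<forall>u v. u * z * v \<in> T}"
  then show "r * x \<in> {z. \<forall>u v. u * z * v \<in> T}"
    by (simp add: mult.assoc[symmetric])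
  show "x * r \<in> {z. \<forall>u v. u * z * v \<in> T}"
    using x by (simp add: mult.assoc)
qed (use assms in \<open>simp_all add: subspace_0 subspace_add subspace_scale distrib_left distrib_right\<close>)

definition polynomial_map :: "('f \<Rightarrow> 'r) \<Rightarrow> bool" where
  "polynomial_map G \<longleftrightarrow> (\<exists>N v. \<forall>l. G l = (\<Sum>i\<le>N. s (l ^ i) (v i)))"

lemma polynomial_map_monomial: "polynomial_map (\<lambda>l. s (l ^ k) c)"
proof -
  have "(\<Sum>i\<le>k. s (l ^ i) (if i = k then c else 0)) = s (l ^ k) c" for l
    by (simp add: if_distrib[of "s _"] cong: if_cong)
  then show ?thesis
    unfolding polynomial_map_def by (intro exI[of _ k] exI[of _ "\<lambda>i. if i = k then c else 0"]) simp
qed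

lemma polynomial_map_const: "polynomial_map (\<lambda>l. c)"
  using polynomial_map_monomial[of 0 c] by simp

lemma polynomial_map_add:
  assumes "polynomial_map G" "polynomial_map H"
  shows "polynomial_map (\<lambda>l. G l + H l)"
proof -
  obtain N v M w where G: "\<And>l. G l = (\<Sum>i\<le>N. s (l ^ i) (v i))"
    and H: "\<And>l. H l = (\<Sum>i\<le>M. s (l ^ i) (w i))"
    using assms unfolding polynomial_map_def by blast
  have pad: "(\<Sum>i\<le>N. s (l ^ i) (v i)) = (\<Sum>i\<le>N + M. s (l ^ i) (if i \<le> N then v i else 0))"
    for N M v l
    by (rule sum.mono_neutral_cong_left) auto
  have "G l + H l
      = (\<Sum>i\<le>N + M. s (l ^ i) ((if i \<le> N then v i else 0) + (if i \<le> M then w i else 0)))" for l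
    unfolding G H pad[where N = N and M = M] pad[where N = M and M = N]
    by (simp add: scale_right_distrib sum.distrib add.commute)
  then show ?thesis
    unfolding polynomial_map_def by (intro exI[of _ "N + M"] exI) (rule allI)
qed

lemma polynomial_map_sum:
  "finite A \<Longrightarrow> (\<And>a. a \<in> A \<Longrightarrow> polynomial_map (F a)) \<Longrightarrow> polynomial_map (\<lambda>l. \<Sum>a\<in>A. F a l)"
  by (induction A rule: finite_induct) (auto intro: polynomial_map_add polynomial_map_const)

lemma polynomial_map_mult:
  assumes "polynomial_map G" "polynomial_map H"
  shows "polynomial_map (\<lambda>l. G l * H l)"
proof -
  obtain N v M w where G: "\<And>l. G l = (\<Sum>i\<le>N. s (l ^ i) (v i))"
    and H: "\<And>l. H l = (\<Sum>i\<le>M. s (l ^ i) (w i))"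
    using assms unfolding polynomial_map_def by blast
  have "G l * H l = (\<Sum>i\<le>N. \<Sum>j\<le>M. s (l ^ (i + j)) (v i * w j))" for l
    unfolding G H sum_distrib_right sum_distrib_left
    by (subst sum.swap) (simp add: power_add mult.commute)
  moreover have "polynomial_map (\<lambda>l. \<Sum>i\<le>N. \<Sum>j\<le>M. s (l ^ (i + j)) (v i * w j))"
    by (intro polynomial_map_sum polynomial_map_monomial) auto
  ultimately show ?thesis
    by simp
qed

lemma polynomial_map_scale_power: "polynomial_map G \<Longrightarrow> polynomial_map (\<lambda>l. s (l ^ k) (G l))"
  using polynomial_map_mult[OF polynomial_map_monomial[of k 1]] by simp

definition has_jet :: "('f \<Rightarrow> 'r) \<Rightarrow> 'r \<Rightarrow> 'r \<Rightarrow> bool" where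
  "has_jet G a0 a1 \<longleftrightarrow> (\<exists>H. polynomial_map H \<and> (\<forall>l. G l = a0 + s l a1 + s (l ^ 2) (H l)))"

lemma has_jet_cong:
  "has_jet G a0 a1 \<Longrightarrow> (\<And>l. G' l = G l) \<Longrightarrow> a0' = a0 \<Longrightarrow> a1' = a1 \<Longrightarrow> has_jet G' a0' a1'"
  unfolding has_jet_def by simp

lemma has_jet_line: "has_jet (\<lambda>l. x + s l y) x y"
  unfolding has_jet_def using polynomial_map_const[of 0] by auto

lemma has_jet_const: "has_jet (\<lambda>l. c) c 0"
  using has_jet_line[of c 0] by simp

lemma has_jet_add:
  assumes "has_jet G a0 a1" "has_jet H b0 b1"
  shows "has_jet (\<lambda>l. G l + H l) (a0 + b0) (a1 + b1)"
proof -
  obtain G2 H2 where "polynomial_map G2" "polynomial_map H2"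
    and "\<And>l. G l = a0 + s l a1 + s (l ^ 2) (G2 l)" "\<And>l. H l = b0 + s l b1 + s (l ^ 2) (H2 l)"
    using assms unfolding has_jet_def by blast
  then show ?thesis
    unfolding has_jet_def
    by (intro exI[of _ "\<lambda>l. G2 l + H2 l"]) (simp add: polynomial_map_add algebra_simps)
qed

lemma has_jet_mult:
  assumes "has_jet G a0 a1" "has_jet H b0 b1"
  shows "has_jet (\<lambda>l. G l * H l) (a0 * b0) (a0 * b1 + a1 * b0)"
proof -
  obtain G2 H2 where G2: "polynomial_map G2" and H2: "polynomial_map H2"
    and G: "\<And>l. G l = a0 + s l a1 + s (l ^ 2) (G2 l)"
    and H: "\<And>l. H l = b0 + s l b1 + s (l ^ 2) (H2 l)"
    using assms unfolding has_jet_def by blast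
  define R where "R l = a1 * b1 + a0 * H2 l + G2 l * b0 + s l (a1 * H2 l + G2 l * b1)
    + s (l ^ 2) (G2 l * H2 l)" for l
  have "polynomial_map R"
    unfolding R_def
    by (intro polynomial_map_add polynomial_map_mult polynomial_map_const G2 H2
        polynomial_map_scale_power[where k = 1, simplified] polynomial_map_scale_power)
  moreover have "G l * H l = a0 * b0 + s l (a0 * b1 + a1 * b0) + s (l ^ 2) (R l)" for l
    unfolding G H R_def by (simp add: algebra_simps power2_eq_square)
  ultimately show ?thesis
    unfolding has_jet_def by blast
qed

lemma has_jet_scale:
  assumes "has_jet G a0 a1"
  shows "has_jet (\<lambda>l. s c (G l)) (s c a0) (s c a1)"
  using has_jet_mult[OF has_jet_const[of "s c 1"] assms] by (rule has_jet_cong) simp_all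

lemma has_jet_diff:
  "has_jet G a0 a1 \<Longrightarrow> has_jet H b0 b1 \<Longrightarrow> has_jet (\<lambda>l. G l - H l) (a0 - b0) (a1 - b1)"
  using has_jet_add[of G a0 a1 "\<lambda>l. s (-1) (H l)" "s (-1) b0" "s (-1) b1"]
    has_jet_scale[of H b0 b1 "-1"]
  by simp

lemma has_jet_sum:
  "finite A \<Longrightarrow> (\<And>i. i \<in> A \<Longrightarrow> has_jet (G i) (a i) (b i)) \<Longrightarrow>
    has_jet (\<lambda>l. \<Sum>i\<in>A. G i l) (\<Sum>i\<in>A. a i) (\<Sum>i\<in>A. b i)"
proof (induction A rule: finite_induct)
  case empty
  then show ?case
    using has_jet_const[of 0] by simp
next
  case (insert x F)
  then show ?case
    using has_jet_add[of "G x" "a x" "b x" "\<lambda>l. \<Sum>i\<in>F. G i l"] by simp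
qed

lemma has_jet_power:
  assumes "has_jet G a0 a1"
  shows "has_jet (\<lambda>l. G l ^ m) (a0 ^ m) (\<Sum>j<m. a0 ^ j * a1 * a0 ^ (m - Suc j))"
proof (induction m)
  case 0
  then show ?case
    using has_jet_const[of 1] by simp
next
  case (Suc m)
  have derivative: "a0 * (\<Sum>j<m. a0 ^ j * a1 * a0 ^ (m - Suc j)) + a1 * a0 ^ m
      = (\<Sum>j<Suc m. a0 ^ j * a1 * a0 ^ (Suc m - Suc j))"
    unfolding sum.lessThan_Suc_shift by (simp add: sum_distrib_left mult.assoc)
  show ?case
    using has_jet_mult[OF assms Suc.IH] by (rule has_jet_cong) (simp_all add: derivative)
qed

definition poly_alg_deriv :: "'f poly \<Rightarrow> 'r \<Rightarrow> 'r \<Rightarrow> 'r" where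
  "poly_alg_deriv p a u = (\<Sum>i\<le>degree p. s (coeff p i) (\<Sum>j<i. a ^ j * u * a ^ (i - Suc j)))"

lemma has_jet_poly_alg:
  "has_jet X a u \<Longrightarrow> has_jet (\<lambda>l. poly_alg s p (X l)) (poly_alg s p a) (poly_alg_deriv p a u)"
  unfolding poly_alg_def poly_alg_deriv_def by (intro has_jet_sum has_jet_scale has_jet_power) simp_all

lemma poly_alg_deriv_diff: "poly_alg_deriv p a (u - v) = poly_alg_deriv p a u - poly_alg_deriv p a v"
  unfolding poly_alg_deriv_def
  by (simp add: algebra_simps sum_subtractf scale_right_diff_distrib)

lemma poly_alg_deriv_commutator: "poly_alg_deriv p a (commutator r a) = commutator r (poly_alg s p a)"
  unfolding poly_alg_deriv_def commutator_power_sum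
  unfolding poly_alg_def commutator_def
  by (simp add: sum_distrib_left sum_distrib_right scale_right_diff_distrib sum_subtractf)

end

locale infinite_field_algebra = field_algebra s for s :: "'f::field \<Rightarrow> 'r::ring_1 \<Rightarrow> 'r" +
  assumes infinite_field: "infinite (UNIV :: 'f set)"
begin

lemma has_jet_derivative_in_subspace:
  assumes "has_jet G a0 a1" "subspace W" "\<And>l. G l \<in> W"
  shows "a1 \<in> W"
proof -
  obtain H N v where H: "\<And>l. H l = (\<Sum>i\<le>N. s (l ^ i) (v i))"
    and G: "\<And>l. G l = a0 + s l a1 + s (l ^ 2) (H l)"
    using assms(1) unfolding has_jet_def polynomial_map_def by blast
  define u where "u i = (if i = 0 then a0 else if i = 1 then a1 else v (i - 2))" for i
  have G_sum: "G l = (\<Sum>i\<le>Suc (Suc N). s (l ^ i) (u i))" for l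
    unfolding G H sum.atMost_Suc_shift u_def
    by (simp add: scale_sum_right mult.commute power2_eq_square add.assoc mult.assoc)
  have "u 1 \<in> W"
  proof (rule poly_coeffs_in_subspace[OF assms(2) infinite_field, where N = "Suc (Suc N)"])
    show "(\<Sum>i\<le>Suc (Suc N). s (l ^ i) (u i)) \<in> W" for l
      using assms(3)[of l] unfolding G_sum .
  qed simp
  then show ?thesis
    by (simp add: u_def)
qed

lemma subspace_power_binomial:
  assumes "subspace V" "\<And>x. x ^ k \<in> V" "of_nat (k choose j) \<noteq> (0::'f)"
  shows "x ^ j \<in> V"
proof -
  have "j \<le> k"
    using assms(3) by (cases "j \<le> k") (auto simp: binomial_eq_0)
  have "s (of_nat (k choose j)) (x ^ j) \<in> V"
  proof (rule poly_coeffs_in_subspace[OF assms(1) infinite_field _ \<open>j \<le> k\<close>,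
        where v = "\<lambda>i. s (of_nat (k choose i)) (x ^ i)"])
    fix l :: 'f
    have "(1 + s l x) ^ k = (\<Sum>i\<le>k. s (l ^ i) (s (of_nat (k choose i)) (x ^ i)))"
      unfolding binomial_one_plus by (simp add: scale_power mult.commute)
    then show "(\<Sum>i\<le>k. s (l ^ i) (s (of_nat (k choose i)) (x ^ i))) \<in> V"
      using assms(2) by metis
  qed
  then show ?thesis
    using subspace_scale_cancel assms(1,3) by blast
qed

definition poly_span :: "'f poly \<Rightarrow> 'r set" where
  "poly_span p = span {poly_alg s p (a * b) - poly_alg s p (b * a) | a b. True}"

definition centralizer_mod :: "'f poly \<Rightarrow> 'r set" where
  "centralizer_mod p = {t. \<forall>c. commutator t c \<in> poly_span p}"

lemma subspace_poly_span: "subspace (poly_span p)"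
  by (simp add: poly_span_def)

lemma poly_alg_commutator_mem_poly_span: "poly_alg s p (a * b) - poly_alg s p (b * a) \<in> poly_span p"
  unfolding poly_span_def by (rule span_base) blast

lemma commutator_poly_alg_commutator_mem_poly_span:
  "commutator r (poly_alg s p (a * b) - poly_alg s p (b * a)) \<in> poly_span p"
proof -
  define X where "X l = a + s l (commutator r a)" for l
  define Y where "Y l = b + s l (commutator r b)" for l
  have X: "has_jet X a (commutator r a)" and Y: "has_jet Y b (commutator r b)"
    unfolding X_def Y_def by (rule has_jet_line)+
  have XY: "has_jet (\<lambda>l. X l * Y l) (a * b) (commutator r (a * b))"
    and YX: "has_jet (\<lambda>l. Y l * X l) (b * a) (commutator r (b * a))"
    by (rule has_jet_cong[OF has_jet_mult[OF X Y]] has_jet_cong[OF has_jet_mult[OF Y X]];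
        simp add: commutator_def algebra_simps)+
  have "has_jet (\<lambda>l. poly_alg s p (X l * Y l) - poly_alg s p (Y l * X l))
      (poly_alg s p (a * b) - poly_alg s p (b * a))
      (commutator r (poly_alg s p (a * b)) - commutator r (poly_alg s p (b * a)))"
    using has_jet_diff[OF has_jet_poly_alg[OF XY, of p] has_jet_poly_alg[OF YX, of p]]
    by (simp only: poly_alg_deriv_commutator)
  then have "has_jet (\<lambda>l. poly_alg s p (X l * Y l) - poly_alg s p (Y l * X l))
      (poly_alg s p (a * b) - poly_alg s p (b * a))
      (commutator r (poly_alg s p (a * b) - poly_alg s p (b * a)))"
    by (rule has_jet_cong) (simp_all add: commutator_def algebra_simps)
  then show ?thesis
    by (rule has_jet_derivative_in_subspace) (simp_all add: subspace_poly_span poly_alg_commutator_mem_poly_span)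
qed

lemma poly_span_commutator: "w \<in> poly_span p \<Longrightarrow> commutator r w \<in> poly_span p"
  unfolding poly_span_def
proof (induction rule: span_induct_alt)
  case base
  then show ?case
    by (simp add: commutator_def span_zero)
next
  case (step c x y)
  then obtain a b where "x = poly_alg s p (a * b) - poly_alg s p (b * a)"
    by blast
  moreover have "commutator r (s c x + y) = s c (commutator r x) + commutator r y"
    by (simp add: commutator_def algebra_simps)
  ultimately show ?case
    using step commutator_poly_alg_commutator_mem_poly_span[of r p a b]
    by (simp add: poly_span_def span_add span_scale)
qed

lemma subspace_centralizer_mod: "subspace (centralizer_mod p)"
proof (rule subspaceI)
  show "0 \<in> centralizer_mod p"
    unfolding centralizer_mod_def by (simp add: commutator_def poly_span_def span_zero)
next
  fix x y assume "x \<in> centralizer_mod p" "y \<in> centralizer_mod p"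
  moreover have "commutator (x + y) c = commutator x c + commutator y c" for c
    by (simp add: commutator_def algebra_simps)
  ultimately show "x + y \<in> centralizer_mod p"
    unfolding centralizer_mod_def by (simp add: poly_span_def span_add)
next
  fix c x assume "x \<in> centralizer_mod p"
  moreover have "commutator (s c x) d = s c (commutator x d)" for d
    by (simp add: commutator_def scale_right_diff_distrib)
  ultimately show "s c x \<in> centralizer_mod p"
    unfolding centralizer_mod_def by (simp add: poly_span_def span_scale)
qed

lemma centralizer_mod_mult:
  assumes "u \<in> centralizer_mod p" "v \<in> centralizer_mod p"
  shows "u * v \<in> centralizer_mod p"
proof -
  have "commutator (u * v) c = commutator u (v * c) + commutator v (c * u)" for c
    by (simp add: commutator_def algebra_simps)
  then show ?thesis
    using assms unfolding centralizer_mod_def by (simp add: poly_span_def span_add)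
qed

lemma centralizer_mod_commutator:
  assumes "t \<in> centralizer_mod p"
  shows "commutator t r \<in> centralizer_mod p"
proof -
  have "commutator (commutator t r) c = commutator t (commutator r c) - commutator r (commutator t c)"
    for c
    by (simp add: commutator_def algebra_simps)
  then show ?thesis
    using assms poly_span_commutator unfolding centralizer_mod_def
    by (simp add: poly_span_def span_diff)
qed

lemma poly_alg_mem_centralizer_mod: "poly_alg s p a \<in> centralizer_mod p"
  unfolding centralizer_mod_def
proof (intro CollectI allI)
  fix c
  have "has_jet (\<lambda>l. poly_alg s p (a * (1 + s l c)) - poly_alg s p ((1 + s l c) * a))
      (poly_alg s p a - poly_alg s p a) (poly_alg_deriv p a (a * c) - poly_alg_deriv p a (c * a))"
    using has_jet_diff[OF has_jet_poly_alg[OF has_jet_line[of a "a * c"], of p]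
        has_jet_poly_alg[OF has_jet_line[of a "c * a"], of p]]
    by (rule has_jet_cong) (simp_all add: distrib_left distrib_right)
  then have "poly_alg_deriv p a (a * c) - poly_alg_deriv p a (c * a) \<in> poly_span p"
    by (rule has_jet_derivative_in_subspace[OF _ subspace_poly_span])
      (rule poly_alg_commutator_mem_poly_span)
  also have "poly_alg_deriv p a (a * c) - poly_alg_deriv p a (c * a)
      = poly_alg_deriv p a (commutator (- c) a)"
    by (simp add: commutator_def flip: poly_alg_deriv_diff)
  also have "\<dots> = commutator (poly_alg s p a) c"
    using poly_alg_deriv_commutator[of p a "- c"] by (simp add: commutator_def)
  finally show "commutator (poly_alg s p a) c \<in> poly_span p" .
qed

lemma power_degree_mem_centralizer_mod:
  assumes "p \<noteq> 0"
  shows "a ^ degree p \<in> centralizer_mod p"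
proof -
  have "s (coeff p (degree p)) (a ^ degree p) \<in> centralizer_mod p"
  proof (rule poly_coeffs_in_subspace[OF subspace_centralizer_mod infinite_field,
        where v = "\<lambda>i. s (coeff p i) (a ^ i)"])
    fix l :: 'f
    have "poly_alg s p (s l a) = (\<Sum>i\<le>degree p. s (l ^ i) (s (coeff p i) (a ^ i)))"
      unfolding poly_alg_def by (simp add: scale_power mult.commute)
    then show "(\<Sum>i\<le>degree p. s (l ^ i) (s (coeff p i) (a ^ i))) \<in> centralizer_mod p"
      using poly_alg_mem_centralizer_mod by metis
  qed simp
  moreover have "coeff p (degree p) \<noteq> 0"
    using assms by simp
  ultimately show ?thesis
    by (rule subspace_scale_cancel[OF subspace_centralizer_mod])
qed

end

locale simple_field_algebra = field_algebra s for s :: "'f::field \<Rightarrow> 'r::ring_1 \<Rightarrow> 'r" +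
  assumes simple: "simple_algebra s"
begin

lemma algebra_one_neq_zero: "(1::'r) \<noteq> 0"
  using simple unfolding simple_algebra_def by blast

lemma alg_ideal_trivial: "alg_ideal s I \<Longrightarrow> I = {0} \<or> I = UNIV"
  using simple unfolding simple_algebra_def by blast

lemma central_nonzero_invertible:
  fixes z :: 'r
  assumes "z \<in> center" "z \<noteq> 0"
  obtains w where "z * w = 1" "w * z = 1"
proof -
  have "z \<in> range ((*) z)"
    by (metis mult_1_right rangeI)
  then have "1 \<in> range ((*) z)"
    using alg_ideal_trivial[OF alg_ideal_central_multiples[OF assms(1)]] assms(2) by blast
  then obtain w where "1 = z * w"
    by blast
  then show ?thesis
    using that[of w] assms(1) by (simp add: center_def)
qed

lemma simple_algebra_prime:
  fixes b c :: 'r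
  assumes "\<And>y. b * y * c = 0"
  shows "b = 0 \<or> c = 0"
proof -
  let ?J = "{z. \<forall>u. z * u * c = 0}"
  have "alg_ideal s ?J"
    unfolding alg_ideal_def
  proof (intro conjI allI ballI)
    fix r x assume x: "x \<in> ?J"
    then show "r * x \<in> ?J"
      by (simp add: mult.assoc)
    have "x * (r * u) * c = 0" for u
      using x by blast
    then show "x * r \<in> ?J"
      by (simp add: mult.assoc)
  qed (simp_all add: distrib_right)
  moreover have "b \<in> ?J"
    using assms by blast
  ultimately consider "?J = {0}" | "?J = UNIV"
    using alg_ideal_trivial by blast
  then show ?thesis
  proof cases
    case 1
    then show ?thesis
      using \<open>b \<in> ?J\<close> by blast
  next
    case 2
    then have "1 * 1 * c = 0"
      by blast
    then show ?thesis
      by simp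
  qed
qed

lemma square_central_if_commutator_twice_zero:
  fixes t :: 'r
  assumes twice: "\<And>r. commutator t (commutator t r) = 0"
  shows "t * t \<in> center"
proof (cases "(2::'f) = 0")
  case True
  have "t * t * r - r * (t * t) = commutator t (commutator t r) + s 2 (t * r * t - r * t * t)" for r
    by (simp add: scale_two commutator_def algebra_simps)
  then have "t * t * r = r * (t * t)" for r
    using True twice by simp
  then show ?thesis
    by (simp add: center_def)
next
  case False
  have Leibniz: "commutator t (r * w) = commutator t r * w + r * commutator t w" for r w
    by (simp add: commutator_def algebra_simps)
  have "commutator t (commutator t (r * w)) = commutator t (commutator t r) * w
      + s 2 (commutator t r * commutator t w) + r * commutator t (commutator t w)" for r w
    by (simp add: Leibniz scale_two commutator_add_right add.assoc)
  then have product: "commutator t r * commutator t w = 0" for r w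
    using False twice by simp
  have "commutator t r * w * commutator t y
      = commutator t r * commutator t (w * y) - commutator t r * commutator t w * y" for r w y
    by (simp add: Leibniz algebra_simps)
  then have "commutator t r * w * commutator t y = 0" for r w y
    by (simp add: product)
  then have "commutator t r = 0" for r
    using simple_algebra_prime[of "commutator t r" "commutator t r"] by simp
  then have "t * r = r * t" for r
    by (simp add: commutator_def)
  then have "t * t * r = r * (t * t)" for r
    by (metis mult.assoc)
  then show ?thesis
    by (simp add: center_def)
qed

lemma lie_ideal_subalgebra_cases:
  fixes T :: "'r set"
  assumes T: "subspace T" and mult: "\<And>u v. u \<in> T \<Longrightarrow> v \<in> T \<Longrightarrow> u * v \<in> T"
    and lie: "\<And>t r. t \<in> T \<Longrightarrow> commutator t r \<in> T"
  shows "T = UNIV \<or> (\<forall>a\<in>T. \<forall>b\<in>T. a * b = b * a)"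
proof -
  define I where "I = {z. \<forall>u v. u * z * v \<in> T}"
  have "alg_ideal s I"
    unfolding I_def by (rule alg_ideal_sandwich[OF T])
  then consider "I = UNIV" | "I = {0}"
    using alg_ideal_trivial by blast
  then show ?thesis
  proof cases
    case 1
    then have "1 * z * 1 \<in> T" for z
      unfolding I_def by blast
    then show ?thesis
      by auto
  next
    case 2
    have "commutator a b \<in> I" if "a \<in> T" "b \<in> T" for a b
    proof -
      have right: "commutator a b * v \<in> T" for v
      proof -
        have "commutator a b * v = commutator a (b * v) - b * commutator a v"
          by (simp add: commutator_def algebra_simps)
        then show ?thesis
          using that by (simp add: subspace_diff[OF T] lie mult)
      qed
      have "u * (commutator a b * v) = commutator a b * (v * u) - commutator (commutator a b * v) u" for u v
        by (simp add: commutator_def mult.assoc)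
      then have "u * commutator a b * v \<in> T" for u v
        using right lie[OF right] by (simp add: subspace_diff[OF T] mult.assoc)
      then show ?thesis
        unfolding I_def by blast
    qed
    then show ?thesis
      using 2 by (auto simp: commutator_def)
  qed
qed

lemma square_zero_sandwich_power:
  fixes a y :: 'r
  assumes powers: "\<And>x::'r. x ^ Suc m \<in> center" and "a * a = 0" "a \<noteq> 0"
  shows "(a * y) ^ m * a = 0"
proof (rule ccontr)
  define e where "e = a * y"
  have "a * e = 0"
    using \<open>a * a = 0\<close> by (simp add: e_def mult.assoc[symmetric])
  have binomial: "(e + a) ^ Suc k = e ^ Suc k + e ^ k * a" for k
  proof (induction k)
    case (Suc k)
    have "(e + a) ^ Suc (Suc k) = (e ^ Suc k + e ^ k * a) * (e + a)"
      using Suc by (simp only: power_Suc2)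
    also have "\<dots> = e ^ Suc k * e + e ^ Suc k * a + e ^ k * (a * e) + e ^ k * (a * a)"
      by (simp add: algebra_simps)
    also have "\<dots> = e ^ Suc (Suc k) + e ^ Suc k * a"
      using \<open>a * e = 0\<close> \<open>a * a = 0\<close> by (simp only: power_Suc2) simp
    finally show ?case .
  qed simp
  have "e ^ m * a \<in> center"
    using binomial[of m] powers[of "e + a"] powers[of e]
    by (simp add: center_def algebra_simps)
  moreover assume "(a * y) ^ m * a \<noteq> 0"
  ultimately obtain w where "w * (e ^ m * a) = 1"
    using central_nonzero_invertible e_def by metis
  then have "a = w * (e ^ m * a) * a"
    by simp
  also have "\<dots> = 0"
    using \<open>a * a = 0\<close> by (simp add: mult.assoc)
  finally show False
    using \<open>a \<noteq> 0\<close> by simp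
qed

end

locale simple_infinite_field_algebra =
  simple_field_algebra s + infinite_field_algebra s for s :: "'f::field \<Rightarrow> 'r::ring_1 \<Rightarrow> 'r"
begin

lemma sandwich_power_vanishes_pred:
  fixes a y :: 'r
  assumes vanish: "\<And>y. (a * y) ^ Suc i * a = 0"
  shows "(a * y) ^ i * a = 0"
proof -
  define X where "X = a * y"
  have "X ^ i * a * w * (X ^ i * a) = 0" for w
  proof -
    \<comment> \<open>The curve \<open>l \<mapsto> (a * (y + l * w * X ^ i)) ^ Suc i * a\<close> is identically zero,
      and all terms of its derivative except \<open>X ^ i * a * w * X ^ i * a\<close> vanish anyway.\<close>
    define Y where "Y = a * (w * X ^ i)"
    have "has_jet (\<lambda>l. a * (y + s l (w * X ^ i))) X Y"
      using has_jet_line[of X Y] by (rule has_jet_cong) (simp_all add: X_def Y_def distrib_left)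
    then have "has_jet (\<lambda>l. (a * (y + s l (w * X ^ i))) ^ Suc i * a) (X ^ Suc i * a)
        (X ^ Suc i * 0 + (\<Sum>j<Suc i. X ^ j * Y * X ^ (Suc i - Suc j)) * a)"
      by (intro has_jet_mult has_jet_power has_jet_const)
    then have "X ^ Suc i * 0 + (\<Sum>j<Suc i. X ^ j * Y * X ^ (Suc i - Suc j)) * a \<in> {0}"
      by (rule has_jet_derivative_in_subspace) (simp_all only: vanish subspace_single_0 singleton_iff)
    moreover have "(\<Sum>j<Suc i. X ^ j * Y * X ^ (Suc i - Suc j)) * a
        = (\<Sum>j<i. X ^ j * Y * X ^ (Suc i - Suc j) * a) + X ^ i * Y * a"
      by (simp add: sum_distrib_right distrib_right)
    moreover have "X ^ j * Y * X ^ (Suc i - Suc j) * a = 0" if "j < i" for j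
    proof -
      have "i + (Suc i - Suc j) = (i - Suc j) + Suc i"
        using that by arith
      then have "X ^ i * X ^ (Suc i - Suc j) = X ^ (i - Suc j) * X ^ Suc i"
        by (simp only: power_add[symmetric])
      then have "X ^ j * Y * X ^ (Suc i - Suc j) * a = X ^ j * a * w * X ^ (i - Suc j) * (X ^ Suc i * a)"
        by (simp add: Y_def mult.assoc)
      then show ?thesis
        using vanish by (simp add: X_def)
    qed
    ultimately have "X ^ i * Y * a = 0"
      by simp
    then show ?thesis
      by (simp add: Y_def mult.assoc)
  qed
  then have "X ^ i * a = 0"
    using simple_algebra_prime[of "X ^ i * a" "X ^ i * a"] by (simp add: mult.assoc)
  then show ?thesis
    by (simp add: X_def)
qed

lemma sandwich_power_vanishes:
  fixes a :: 'r
  shows "(\<And>y. (a * y) ^ m * a = 0) \<Longrightarrow> a = 0"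
proof (induction m)
  case 0
  then show ?case
    by simp
next
  case (Suc m)
  show ?case
    by (rule Suc.IH) (rule sandwich_power_vanishes_pred[OF Suc.prems])
qed

lemma square_zero_eq_zero_if_powers_central:
  fixes a :: 'r
  assumes "\<And>x::'r. x ^ Suc m \<in> center" "a * a = 0"
  shows "a = 0"
  using square_zero_sandwich_power[OF assms] sandwich_power_vanishes by blast

lemma invertible_if_powers_central:
  fixes x :: 'r
  assumes powers: "\<And>x::'r. x ^ Suc m \<in> center" and "x \<noteq> 0"
  obtains x' where "x * x' = 1" "x' * x = 1"
proof (cases "x ^ Suc m = 0")
  case False
  then obtain w where w: "x ^ Suc m * w = 1" "w * x ^ Suc m = 1"
    using central_nonzero_invertible powers by blast
  have right: "x * (x ^ m * w) = 1" and left: "(w * x ^ m) * x = 1"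
    using w by (simp_all add: mult.assoc flip: power_Suc2)
  have "w * x ^ m = (w * x ^ m) * (x * (x ^ m * w))"
    using right by simp
  also have "\<dots> = x ^ m * w"
    using left by (simp add: mult.assoc[symmetric])
  finally show ?thesis
    using that[of "x ^ m * w"] right left by simp
next
  case True
  define k where "k = (LEAST k. x ^ k = 0)"
  have "x ^ k = 0"
    unfolding k_def by (rule LeastI[of _ "Suc m"]) (rule True)
  moreover have "k \<noteq> 0"
    using \<open>x ^ k = 0\<close> algebra_one_neq_zero by (metis power_0)
  moreover have "k \<noteq> 1"
    using \<open>x ^ k = 0\<close> \<open>x \<noteq> 0\<close> by (metis power_one_right)
  ultimately obtain j where j: "k = Suc (Suc j)" "x ^ Suc (Suc j) = 0"
    by (metis One_nat_def not0_implies_Suc)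
  have "x ^ Suc j * x ^ Suc j = x ^ Suc (Suc j) * x ^ j"
    by (simp only: power_add[symmetric]) simp
  then have "x ^ Suc j * x ^ Suc j = 0"
    using j(2) by simp
  then have "x ^ Suc j = 0"
    by (rule square_zero_eq_zero_if_powers_central[OF powers])
  moreover have "x ^ Suc j \<noteq> 0"
    using not_less_Least[of "Suc j" "\<lambda>k. x ^ k = 0"] j(1) unfolding k_def by simp
  ultimately show ?thesis
    by blast
qed

lemma commutator_eq_one_if_not_central:
  fixes x :: 'r
  assumes powers: "\<And>x::'r. x ^ Suc m \<in> center"
    and nilpotent: "\<And>x y::'r. (commutator x ^^ n) y = 0" and "x \<notin> center"
  obtains v where "commutator x v = 1"
proof -
  obtain y where "commutator x y \<noteq> 0"
    using \<open>x \<notin> center\<close> unfolding center_def commutator_def by auto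
  define k where "k = (LEAST k. (commutator x ^^ Suc k) y = 0)"
  have "(commutator x ^^ Suc k) y = 0"
    unfolding k_def by (rule LeastI[of _ n]) (simp add: funpow_Suc_right nilpotent commutator_def)
  have "k \<noteq> 0"
    using \<open>(commutator x ^^ Suc k) y = 0\<close> \<open>commutator x y \<noteq> 0\<close> by (cases k) auto
  then obtain j where "k = Suc j"
    using not0_implies_Suc by blast
  with \<open>(commutator x ^^ Suc k) y = 0\<close>
  have j: "k = Suc j" "commutator x ((commutator x ^^ Suc j) y) = 0"
    by simp_all
  define u where "u = (commutator x ^^ Suc j) y"
  define w where "w = (commutator x ^^ j) y"
  have "u \<noteq> 0"
    using not_less_Least[of j "\<lambda>k. (commutator x ^^ Suc k) y = 0"] j(1)
    unfolding u_def k_def by simp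
  then obtain u' where u': "u * u' = 1" "u' * u = 1"
    by (rule invertible_if_powers_central[OF powers])
  have "x * u = u * x"
    using j(2) by (simp add: u_def commutator_def)
  have "u' * x = u' * (x * u) * u'"
    using u' by (simp add: mult.assoc)
  also have "\<dots> = (u' * u) * x * u'"
    using \<open>x * u = u * x\<close> by (simp add: mult.assoc)
  finally have "x * u' = u' * x"
    using u' by simp
  then have "commutator x (u' * w) = u' * commutator x w"
    by (simp add: commutator_def right_diff_distrib mult.assoc[symmetric])
  also have "\<dots> = 1"
    using u' by (simp add: u_def w_def)
  finally show ?thesis
    using that by blast
qed

lemma central_if_powers_central_nilpotent_commutator:
  fixes x :: 'r
  assumes powers: "\<And>x::'r. x ^ Suc m \<in> center"
    and nilpotent: "\<And>x y::'r. (commutator x ^^ n) y = 0"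
  shows "x \<in> center"
proof (rule ccontr)
  assume "x \<notin> center"
  then obtain v where v: "commutator x v = 1"
    using commutator_eq_one_if_not_central[OF powers nilpotent] by blast
  have "commutator (x * v) x = x * - commutator x v"
    by (simp add: commutator_def algebra_simps)
  then have step: "commutator (x * v) x = - x"
    using v by simp
  have "(commutator (x * v) ^^ j) x = (if even j then x else - x)" for j
    by (induction j) (simp_all add: step commutator_minus_right)
  then have "x = 0"
    using nilpotent[of "x * v" x] by (simp split: if_splits)
  then show False
    using \<open>x \<notin> center\<close> by (simp add: center_def)
qed

lemma central_if_commutative_lie_ideal_contains_powers:
  fixes T :: "'r set" and x :: 'r
  assumes T: "subspace T" and comm: "\<And>a b. a \<in> T \<Longrightarrow> b \<in> T \<Longrightarrow> a * b = b * a"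
    and lie: "\<And>t r. t \<in> T \<Longrightarrow> commutator t r \<in> T"
    and "0 < k" "\<And>x. x ^ k \<in> T"
  shows "x \<in> center"
proof -
  define K where "K = (LEAST K. 0 < K \<and> (\<forall>x. x ^ K \<in> T))"
  have K: "0 < K" "\<And>x. x ^ K \<in> T"
    using LeastI[of "\<lambda>K. 0 < K \<and> (\<forall>x. x ^ K \<in> T)" k] assms(4,5) unfolding K_def by auto
  have binomial: "of_nat (K choose j) = (0::'f)" if "0 < j" "j < K" for j
  proof (rule ccontr)
    assume "of_nat (K choose j) \<noteq> (0::'f)"
    then have "\<forall>x. x ^ j \<in> T"
      using subspace_power_binomial[OF T K(2)] by blast
    then have "K \<le> j"
      unfolding K_def using that(1) by (intro Least_le) blast
    then show False
      using that(2) by simp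
  qed
  have twice: "commutator t (commutator t r) = 0" if "t \<in> T" for t r
    using comm[OF that lie[OF that]] by (simp add: commutator_def)
  have powers: "x ^ Suc (K + K - 1) \<in> center" for x :: 'r
    using square_central_if_commutator_twice_zero[OF twice[OF K(2)], of x] K(1)
    by (simp flip: power_add)
  have nilpotent: "(commutator x ^^ (K + K)) y = 0" for x y :: 'r
    by (simp add: funpow_add commutator_iterate_eq_commutator_power[OF K(1) binomial] twice K(2))
  show ?thesis
    by (rule central_if_powers_central_nilpotent_commutator[OF powers nilpotent])
qed

lemma commutator_mem_poly_span:
  assumes "0 < degree p"
  shows "commutator a b \<in> poly_span p"
proof (cases "centralizer_mod p = UNIV")
  case True
  then show ?thesis
    by (auto simp: centralizer_mod_def)
next
  case False
  then have commute: "\<And>u v. u \<in> centralizer_mod p \<Longrightarrow> v \<in> centralizer_mod p \<Longrightarrow> u * v = v * u"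
    using lie_ideal_subalgebra_cases[OF subspace_centralizer_mod centralizer_mod_mult
        centralizer_mod_commutator] by blast
  have "p \<noteq> 0"
    using assms by auto
  have "a \<in> center"
    using subspace_centralizer_mod commute centralizer_mod_commutator assms
      power_degree_mem_centralizer_mod[OF \<open>p \<noteq> 0\<close>]
    by (rule central_if_commutative_lie_ideal_contains_powers)
  then show ?thesis
    by (simp add: center_def commutator_def subspace_0[OF subspace_poly_span])
qed

end

theorem corollary4p9:
  fixes s :: "'f::field \<Rightarrow> 'r::ring_1 \<Rightarrow> 'r" and p :: "'f poly"
  assumes "simple_algebra s"
    and "infinite (UNIV :: 'f set)"
    and "degree p > 0"
  shows "module.span s {a * b - b * a | a b. True}
           \<subseteq> module.span s {poly_alg s p (a * b) - poly_alg s p (b * a) | a b. True}"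
proof -
  interpret simple_infinite_field_algebra s
    using assms(1,2) by unfold_locales (auto simp: simple_algebra_def)
  have "{a * b - b * a | a b. True} \<subseteq> poly_span p"
    using commutator_mem_poly_span[OF assms(3)] by (auto simp: commutator_def)
  then show ?thesis
    unfolding poly_span_def by (rule span_minimal) simp
qed

end
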